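(* Let $A\in\mathbb{R}^{m\times n}$ satisfy the group restricted isometry property of order $2k$ with constant $\delta_{2k}\in(0,1)$, and let $\|\cdot\|_A$ be a norm on $\mathbb{R}^n$ that is decomposable with respect to $\mathcal{G}$. Let $f>0$ be a constant such that for every $h\in\mathbb{R}^n$, every $\Lambda_0\in\mathrm{GkS}$ and every optimal group $k$-sparse decomposition $\Lambda_1,\ldots,\Lambda_s$ of $h_{\mathcal{N}\setminus\Lambda_0}$ with respect to $\|\cdot\|_A$, $\sum_{j=2}^s\|h_{\Lambda_j}\|_2\le\frac1f\|h_{\mathcal{N}\setminus\Lambda_0}\|_A$. Let $h\in\mathbb{R}^n$, $\Lambda_0\in\mathrm{GkS}$, let $\Lambda_1,\ldots,\Lambda_s$ ($s\ge1$) be an optimal group $k$-sparse decomposition of $h_{\mathcal{N}\setminus\Lambda_0}$ with respect to $\|\cdot\|_A$, and let $\Lambda=\Lambda_0\cup\Lambda_1$. Then $$\|h_\Lambda\|_2\le\frac{\sqrt2\,\delta_{2k}}{f(1-\delta_{2k})}\|h_{\mathcal{N}\setminus\Lambda_0}\|_A+\frac{\sqrt{1+\delta_{2k}}}{1-\delta_{2k}}\|Ah\|_2 .$$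
   Context: Fix positive integers $n,k$, $\mathcal{N}=\{1,\ldots,n\}$, and a partition $\mathcal{G}=\{G_1,\ldots,G_g\}$ of $\mathcal{N}$ with $|G_i|\le k$. For $x\in\mathbb{R}^n$, $\Lambda\subseteq\mathcal{N}$: $(x_\Lambda)_i=x_i$ if $i\in\Lambda$, else $0$; $\mathrm{supp}(u)=\{i:u_i\ne0\}$; $G_S=\bigcup_{i\in S}G_i$. For an integer $t$, $\Lambda$ is group $t$-sparse if $\Lambda=G_S$ for some $S$ and $|\Lambda|\le t$; $\mathrm{GkS}$ is the collection of group $k$-sparse sets. A norm is decomposable w.r.t. $\mathcal{G}$ if $\|u+v\|=\|u\|+\|v\|$ whenever $\mathrm{supp}(u)\subseteq G_{S_u}$, $\mathrm{supp}(v)\subseteq G_{S_v}$ with $S_u\cap S_v=\emptyset$. $A$ satisfies the group restricted isometry property of order $2k$ with constant $\delta_{2k}$ if $(1-\delta_{2k})\|z\|_2^2\le\|Az\|_2^2\le(1+\delta_{2k})\|z\|_2^2$ for every $z$ whose support lies in some group $2k$-sparse set. Optimal group $k$-sparse decomposition of $v=h_{\mathcal{N}\setminus\Lambda_0}$ w.r.t. $\|\cdot\|_A$: pairwise disjoint group $k$-sparse sets $\Lambda_1,\ldots,\Lambda_s\subseteq\mathcal{N}\setminus\Lambda_0$ with union $\mathcal{N}\setminus\Lambda_0$, such that for each $i$, with $r_i=v-\sum_{j<i}v_{\Lambda_j}$, $\Lambda_i$ minimizes $\|r_i-(r_i)_\Lambda\|_A$ over group $k$-sparse $\Lambda\subseteq\mathcal{N}\setminus(\Lambda_0\cup\cdots\cup\Lambda_{i-1})$.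 *)

theory Defs
  imports "HOL-Analysis.Analysis"
begin

text \<open>Vectors in R^n are modelled as real^'n for a finite index type 'n (so n = CARD('n)).
  The restriction x_Lambda.\<close>
definition restr :: "'n::finite set \<Rightarrow> real^'n \<Rightarrow> real^'n" where
  "restr L x = (\<chi> i. if i \<in> L then x $ i else 0)"

definition supp :: "real^'n::finite \<Rightarrow> 'n set" where
  "supp u = {i. u $ i \<noteq> 0}"

definition group_partition :: "'n::finite set set \<Rightarrow> nat \<Rightarrow> bool" where
  "group_partition G k \<longleftrightarrow> (\<forall>g\<in>G. g \<noteq> {}) \<and>
     (\<forall>g\<in>G. \<forall>g'\<in>G. g \<noteq> g' \<longrightarrow> g \<inter> g' = {}) \<and> \<Union>G = UNIV \<and>
     (\<forall>g\<in>G. card g \<le> k)"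

definition group_sparse :: "'n::finite set set \<Rightarrow> nat \<Rightarrow> 'n set \<Rightarrow> bool" where
  "group_sparse G t L \<longleftrightarrow> (\<exists>S. S \<subseteq> G \<and> L = \<Union>S) \<and> card L \<le> t"

definition is_norm :: "(real^'n::finite \<Rightarrow> real) \<Rightarrow> bool" where
  "is_norm N \<longleftrightarrow> (\<forall>x. N x = 0 \<longleftrightarrow> x = 0) \<and> (\<forall>c x. N (c *\<^sub>R x) = \<bar>c\<bar> * N x) \<and>
     (\<forall>x y. N (x + y) \<le> N x + N y)"

definition decomposable :: "'n::finite set set \<Rightarrow> (real^'n \<Rightarrow> real) \<Rightarrow> bool" where
  "decomposable G N \<longleftrightarrow> (\<forall>u v Su Sv. Su \<subseteq> G \<longrightarrow> Sv \<subseteq> G \<longrightarrow> Su \<inter> Sv = {} \<longrightarrow>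
     supp u \<subseteq> \<Union>Su \<longrightarrow> supp v \<subseteq> \<Union>Sv \<longrightarrow> N (u + v) = N u + N v)"

definition group_RIP :: "'n::finite set set \<Rightarrow> nat \<Rightarrow> real^'n^'m \<Rightarrow> real \<Rightarrow> bool" where
  "group_RIP G k A d \<longleftrightarrow> (\<forall>z. (\<exists>L. group_sparse G (2*k) L \<and> supp z \<subseteq> L) \<longrightarrow>
      (1 - d) * (norm z)^2 \<le> (norm (A *v z))^2 \<and> (norm (A *v z))^2 \<le> (1 + d) * (norm z)^2)"

text \<open>Optimal group k-sparse decomposition Ls = [Lambda_1, ..., Lambda_s] of h restricted to
  the complement of L0 w.r.t. the norm N.\<close>
definition opt_decomp :: "'n::finite set set \<Rightarrow> nat \<Rightarrow> (real^'n \<Rightarrow> real) \<Rightarrow> real^'n \<Rightarrow> 'n set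
    \<Rightarrow> 'n set list \<Rightarrow> bool" where
  "opt_decomp G k N h L0 Ls \<longleftrightarrow>
     (let v = restr (- L0) h in
       (\<forall>i<length Ls. group_sparse G k (Ls ! i) \<and> Ls ! i \<subseteq> - L0) \<and>
       (\<forall>i<length Ls. \<forall>j<length Ls. i \<noteq> j \<longrightarrow> Ls ! i \<inter> Ls ! j = {}) \<and>
       \<Union>(set Ls) = - L0 \<and>
       (\<forall>i<length Ls.
          let r = v - (\<Sum>j<i. restr (Ls ! j) v);
              U = L0 \<union> (\<Union>j<i. Ls ! j)
          in \<forall>L. group_sparse G k L \<and> L \<subseteq> - U \<longrightarrow>
                 N (r - restr (Ls ! i) r) \<le> N (r - restr L r)))"

end

theory Submission imports Defs begin

text \<open>Write \<open>\<Lambda> = \<Lambda>\<^sub>0 \<union> \<Lambda>\<^sub>1\<close> and split \<open>h = h\<^sub>\<Lambda> + \<Sum>\<^sub>j h\<^sub>\<Lambda>\<^sub>j\<close> over \<open>j \<ge> 2\<close>. By polarization, the RIP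
  makes \<open>A\<close> almost orthogonal on vectors with disjoint group-sparse supports:
  \<open>\<bar>\<langle>Au, Av\<rangle>\<bar> \<le> \<delta> \<parallel>u\<parallel> \<parallel>v\<parallel>\<close>. Expanding \<open>\<parallel>Ah\<^sub>\<Lambda>\<parallel>\<^sup>2 = \<langle>Ah\<^sub>\<Lambda>, Ah\<rangle> - \<Sum>\<^sub>j \<langle>Ah\<^sub>\<Lambda>, Ah\<^sub>\<Lambda>\<^sub>j\<rangle>\<close> and
  bounding the left side below by \<open>(1 - \<delta>) \<parallel>h\<^sub>\<Lambda>\<parallel>\<^sup>2\<close> gives
  \<open>(1 - \<delta>) \<parallel>h\<^sub>\<Lambda>\<parallel> \<le> \<surd>(1 + \<delta>) \<parallel>Ah\<parallel> + \<surd>2 \<delta> \<Sum>\<^sub>j \<parallel>h\<^sub>\<Lambda>\<^sub>j\<parallel>\<close>, and the hypothesis on \<open>f\<close> bounds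
  the tail sum. The partition, norm and decomposability hypotheses are used only through
  that hypothesis.\<close>

lemma supp_restr: "supp (restr L x) \<subseteq> L"
  by (auto simp: supp_def restr_def)

lemma supp_scaleR: "supp (c *\<^sub>R u) \<subseteq> supp u"
  by (auto simp: supp_def)

lemma supp_add: "supp (u + v) \<subseteq> supp u \<union> supp v"
  by (auto simp: supp_def)

lemma supp_diff: "supp (u - v) \<subseteq> supp u \<union> supp v"
  by (auto simp: supp_def)

lemma inner_eq_0_if_supp_disjoint:
  assumes "supp u \<inter> supp v = {}"
  shows "inner u v = 0"
proof -
  have "\<And>i. u $ i * v $ i = 0" using assms by (auto simp: supp_def)
  then show ?thesis by (simp only: inner_vec_def inner_real_def sum.neutral_const)
qed

lemma restr_Un_disjoint:
  assumes "L \<inter> M = {}"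
  shows "restr (L \<union> M) x = restr L x + restr M x"
  using assms by (auto simp: vec_eq_iff restr_def)

lemma restr_UNION_disjoint:
  assumes "finite J" and "\<And>i j. i \<in> J \<Longrightarrow> j \<in> J \<Longrightarrow> i \<noteq> j \<Longrightarrow> L i \<inter> L j = {}"
  shows "restr (\<Union>j\<in>J. L j) x = (\<Sum>j\<in>J. restr (L j) x)"
  using assms
proof (induction J rule: finite_induct)
  case empty
  then show ?case by (simp add: vec_eq_iff restr_def)
next
  case (insert i J)
  then have "L i \<inter> (\<Union>j\<in>J. L j) = {}" by blast
  then show ?case using insert by (simp add: restr_Un_disjoint)
qed

lemma restr_UNIV: "restr UNIV x = x"
  by (simp add: vec_eq_iff restr_def)

lemma group_sparse_Un:
  assumes "group_sparse G k L" and "group_sparse G k M"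
  shows "group_sparse G (2 * k) (L \<union> M)"
proof -
  obtain SL SM where "SL \<subseteq> G" "L = \<Union>SL" "SM \<subseteq> G" "M = \<Union>SM"
    using assms unfolding group_sparse_def by blast
  then have "SL \<union> SM \<subseteq> G" "L \<union> M = \<Union>(SL \<union> SM)" by auto
  moreover have "card (L \<union> M) \<le> 2 * k"
    using card_Un_le[of L M] assms by (simp add: group_sparse_def)
  ultimately show ?thesis unfolding group_sparse_def by (intro conjI exI[of _ "SL \<union> SM"])
qed

lemma group_RIP_sparse_sum:
  assumes "group_RIP G k A d" "group_sparse G k L" "group_sparse G k M" "supp z \<subseteq> L \<union> M"
  shows "(1 - d) * (norm z)\<^sup>2 \<le> (norm (A *v z))\<^sup>2 \<and> (norm (A *v z))\<^sup>2 \<le> (1 + d) * (norm z)\<^sup>2"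
  using assms group_sparse_Un[OF assms(2,3)] unfolding group_RIP_def by blast

text \<open>Polarization: \<open>\<parallel>A(a \<plusminus> b)\<parallel>\<^sup>2 = \<parallel>Aa\<parallel>\<^sup>2 \<plusminus> 2\<langle>Aa, Ab\<rangle> + \<parallel>Ab\<parallel>\<^sup>2\<close> while \<open>\<parallel>a \<plusminus> b\<parallel>\<^sup>2 = 2\<close>.\<close>

lemma group_RIP_inner_unit_le:
  assumes rip: "group_RIP G k A d" and L: "group_sparse G k L" and M: "group_sparse G k M"
    and LM: "L \<inter> M = {}" and a: "supp a \<subseteq> L" and b: "supp b \<subseteq> M"
    and "norm a = 1" and "norm b = 1"
  shows "\<bar>inner (A *v a) (A *v b)\<bar> \<le> d"
proof -
  have ab: "inner a b = 0" using a b LM by (intro inner_eq_0_if_supp_disjoint) blast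
  have "inner a a = 1" "inner b b = 1"
    using assms(7,8) by (simp_all flip: power2_norm_eq_inner)
  then have "(norm (a + b))\<^sup>2 = 2" "(norm (a - b))\<^sup>2 = 2" using ab
    by (simp_all add: power2_norm_eq_inner algebra_simps inner_commute)
  moreover have "supp (a + b) \<subseteq> L \<union> M" "supp (a - b) \<subseteq> L \<union> M"
    using supp_add[of a b] supp_diff[of a b] a b by auto
  ultimately have "(1 - d) * 2 \<le> (norm (A *v (a + b)))\<^sup>2 \<and> (norm (A *v (a + b)))\<^sup>2 \<le> (1 + d) * 2"
    "(1 - d) * 2 \<le> (norm (A *v (a - b)))\<^sup>2 \<and> (norm (A *v (a - b)))\<^sup>2 \<le> (1 + d) * 2"
    using group_RIP_sparse_sum[OF rip L M] by metis+
  moreover have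
    "(norm (A *v (a + b)))\<^sup>2 = (norm (A *v a))\<^sup>2 + 2 * inner (A *v a) (A *v b) + (norm (A *v b))\<^sup>2"
    "(norm (A *v (a - b)))\<^sup>2 = (norm (A *v a))\<^sup>2 - 2 * inner (A *v a) (A *v b) + (norm (A *v b))\<^sup>2"
    by (simp_all add: vec.diff power2_norm_eq_inner algebra_simps inner_commute)
  ultimately show ?thesis by (simp add: abs_le_iff algebra_simps)
qed

lemma group_RIP_inner_le:
  assumes rip: "group_RIP G k A d" and L: "group_sparse G k L" and M: "group_sparse G k M"
    and LM: "L \<inter> M = {}" and u: "supp u \<subseteq> L" and v: "supp v \<subseteq> M"
  shows "\<bar>inner (A *v u) (A *v v)\<bar> \<le> d * norm u * norm v"
proof (cases "u = 0 \<or> v = 0")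
  case True
  then show ?thesis by (auto simp: matrix_vector_mult_0_right)
next
  case False
  define a where "a = (1 / norm u) *\<^sub>R u"
  define b where "b = (1 / norm v) *\<^sub>R v"
  have "supp a \<subseteq> L" "supp b \<subseteq> M"
    using supp_scaleR u v unfolding a_def b_def by blast+
  moreover have "norm a = 1" "norm b = 1" using False by (auto simp: a_def b_def)
  ultimately have "\<bar>inner (A *v a) (A *v b)\<bar> \<le> d"
    by (rule group_RIP_inner_unit_le[OF rip L M LM])
  have "inner (A *v u) (A *v v) = norm u * norm v * inner (A *v a) (A *v b)"
    using False by (simp add: a_def b_def matrix_vector_mult_scaleR)
  then have "\<bar>inner (A *v u) (A *v v)\<bar> = norm u * norm v * \<bar>inner (A *v a) (A *v b)\<bar>"
    by (simp add: abs_mult)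
  also have "\<dots> \<le> norm u * norm v * d"
    using \<open>\<bar>inner (A *v a) (A *v b)\<bar> \<le> d\<close> by (simp add: mult_left_mono)
  finally show ?thesis by (simp add: mult_ac)
qed

lemma norm_add_le_sqrt2_norm_if_orthogonal:
  fixes x y :: "'a::real_inner"
  assumes "inner x y = 0"
  shows "norm x + norm y \<le> sqrt 2 * norm (x + y)"
proof (rule power2_le_imp_le)
  have "(norm (x + y))\<^sup>2 = (norm x)\<^sup>2 + (norm y)\<^sup>2"
    using assms by (simp add: power2_norm_eq_inner algebra_simps inner_commute)
  moreover have "0 \<le> (norm x - norm y)\<^sup>2" by simp
  ultimately show "(norm x + norm y)\<^sup>2 \<le> (sqrt 2 * norm (x + y))\<^sup>2"
    by (simp add: power_mult_distrib power2_eq_square algebra_simps)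
qed simp

lemma group_RIP_cross_term:
  assumes rip: "group_RIP G k A d" and "0 \<le> d"
    and L0: "group_sparse G k L0" and L1: "group_sparse G k L1" and "L0 \<inter> L1 = {}"
    and M: "group_sparse G k M" and "M \<inter> (L0 \<union> L1) = {}" and w: "supp w \<subseteq> M"
  shows "\<bar>inner (A *v restr (L0 \<union> L1) h) (A *v w)\<bar>
           \<le> sqrt 2 * d * norm (restr (L0 \<union> L1) h) * norm w"
proof -
  let ?x = "restr L0 h" and ?y = "restr L1 h"
  have "restr (L0 \<union> L1) h = ?x + ?y" using assms(5) by (rule restr_Un_disjoint)
  moreover have "\<bar>inner (A *v ?x) (A *v w)\<bar> \<le> d * norm ?x * norm w"
    "\<bar>inner (A *v ?y) (A *v w)\<bar> \<le> d * norm ?y * norm w"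
    using group_RIP_inner_le[OF rip L0 M _ supp_restr w]
      group_RIP_inner_le[OF rip L1 M _ supp_restr w] assms(7) by blast+
  moreover have "norm ?x + norm ?y \<le> sqrt 2 * norm (?x + ?y)"
    using supp_restr[of L0 h] supp_restr[of L1 h] assms(5)
    by (intro norm_add_le_sqrt2_norm_if_orthogonal inner_eq_0_if_supp_disjoint) blast
  then have "d * (norm ?x + norm ?y) * norm w \<le> d * (sqrt 2 * norm (?x + ?y)) * norm w"
    using \<open>0 \<le> d\<close> by (intro mult_right_mono mult_left_mono) simp_all
  ultimately show ?thesis
    by (simp add: matrix_vector_right_distrib inner_add_left algebra_simps)
qed

lemma group_RIP_head_bound:
  assumes rip: "group_RIP G k A d" and "0 \<le> d"
    and L0: "group_sparse G k L0" and L1: "group_sparse G k L1" and "L0 \<inter> L1 = {}"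
    and tail: "\<And>j. j \<in> J \<Longrightarrow> group_sparse G k (L j) \<and> L j \<inter> (L0 \<union> L1) = {}"
    and h: "h = restr (L0 \<union> L1) h + (\<Sum>j\<in>J. restr (L j) h)"
  shows "(1 - d) * norm (restr (L0 \<union> L1) h)
           \<le> sqrt (1 + d) * norm (A *v h) + sqrt 2 * d * (\<Sum>j\<in>J. norm (restr (L j) h))"
    (is "(1 - d) * norm ?z \<le> ?R")
proof -
  let ?S = "\<Sum>j\<in>J. norm (restr (L j) h)"
  have RIP_z: "(1 - d) * (norm ?z)\<^sup>2 \<le> (norm (A *v ?z))\<^sup>2"
    "(norm (A *v ?z))\<^sup>2 \<le> (1 + d) * (norm ?z)\<^sup>2"
    using group_RIP_sparse_sum[OF rip L0 L1 supp_restr] by auto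
  have "A *v h = A *v ?z + (\<Sum>j\<in>J. A *v restr (L j) h)"
    by (subst h) (simp add: matrix_vector_right_distrib linear_sum[OF matrix_vector_mul_linear])
  then have expand: "(norm (A *v ?z))\<^sup>2
      = inner (A *v ?z) (A *v h) - (\<Sum>j\<in>J. inner (A *v ?z) (A *v restr (L j) h))"
    by (simp add: power2_norm_eq_inner inner_add_right inner_sum_right)
  have "norm (A *v ?z) \<le> sqrt (1 + d) * norm ?z"
    using real_sqrt_le_mono[OF RIP_z(2)] by (simp add: real_sqrt_mult)
  then have head: "inner (A *v ?z) (A *v h) \<le> sqrt (1 + d) * norm ?z * norm (A *v h)"
    using norm_cauchy_schwarz[of "A *v ?z" "A *v h"] mult_right_mono[of _ _ "norm (A *v h)"]
    by fastforce
  have "- inner (A *v ?z) (A *v restr (L j) h) \<le> sqrt 2 * d * norm ?z * norm (restr (L j) h)"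
    if "j \<in> J" for j
    using tail[OF that] by (intro abs_le_D2 group_RIP_cross_term[OF rip \<open>0 \<le> d\<close> L0 L1
        \<open>L0 \<inter> L1 = {}\<close> _ _ supp_restr]) auto
  then have cross: "- (\<Sum>j\<in>J. inner (A *v ?z) (A *v restr (L j) h)) \<le> sqrt 2 * d * norm ?z * ?S"
    unfolding sum_distrib_left sum_negf[symmetric] by (rule sum_mono)
  have "(1 - d) * (norm ?z)\<^sup>2 \<le> sqrt (1 + d) * norm ?z * norm (A *v h) + sqrt 2 * d * norm ?z * ?S"
    using RIP_z(1) expand head cross by linarith
  also have "\<dots> = norm ?z * ?R" by (simp add: algebra_simps)
  finally have "(1 - d) * (norm ?z)\<^sup>2 \<le> norm ?z * ?R" .
  moreover have "0 \<le> ?R" using \<open>0 \<le> d\<close> by (simp add: sum_nonneg)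
  ultimately show ?thesis
    by (cases "norm ?z = 0") (simp_all add: power2_eq_square mult.assoc)
qed

lemma opt_decomp_restr_split:
  assumes "opt_decomp G k N h L0 Ls" and "Ls \<noteq> []"
  shows "h = restr (L0 \<union> Ls ! 0) h + (\<Sum>j\<in>{1..<length Ls}. restr (Ls ! j) h)"
proof -
  let ?T = "\<Union>j\<in>{1..<length Ls}. Ls ! j"
  have sub: "\<And>i. i < length Ls \<Longrightarrow> Ls ! i \<subseteq> - L0"
    and disj: "\<And>i j. i < length Ls \<Longrightarrow> j < length Ls \<Longrightarrow> i \<noteq> j \<Longrightarrow> Ls ! i \<inter> Ls ! j = {}"
    and cover: "\<Union>(set Ls) = - L0"
    using assms(1) unfolding opt_decomp_def Let_def by auto
  have "- L0 = (\<Union>j\<in>{..<length Ls}. Ls ! j)"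
    unfolding cover[symmetric] by (auto simp: in_set_conv_nth) (use nth_mem in blast)
  also have "{..<length Ls} = insert 0 {1..<length Ls}" using assms(2) by auto
  finally have "- L0 = Ls ! 0 \<union> ?T" by simp
  then have "UNIV = (L0 \<union> Ls ! 0) \<union> ?T" by auto
  moreover have "(L0 \<union> Ls ! 0) \<inter> ?T = {}"
    using sub disj[of 0] assms(2) by fastforce
  ultimately have "h = restr (L0 \<union> Ls ! 0) h + restr ?T h"
    by (metis restr_UNIV restr_Un_disjoint)
  also have "restr ?T h = (\<Sum>j\<in>{1..<length Ls}. restr (Ls ! j) h)"
    using disj by (intro restr_UNION_disjoint) auto
  finally show ?thesis .
qed

theorem lemma5p2:
  fixes A :: "real^'n::finite^'m::finite" and G :: "'n set set" and k :: nat
    and N :: "real^'n \<Rightarrow> real" and d f :: real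
    and h :: "real^'n" and L0 :: "'n set" and Ls :: "'n set list"
  assumes "k > 0" and "group_partition G k"
    and "group_RIP G k A d" and "0 < d" and "d < 1"
    and "is_norm N" and "decomposable G N"
    and "f > 0"
    and "\<forall>h' L0' Ls'. group_sparse G k L0' \<and> opt_decomp G k N h' L0' Ls' \<longrightarrow>
           (\<Sum>j\<in>{1..<length Ls'}. norm (restr (Ls' ! j) h')) \<le> (1 / f) * N (restr (- L0') h')"
    and "group_sparse G k L0"
    and "opt_decomp G k N h L0 Ls" and "Ls \<noteq> []"
  shows "norm (restr (L0 \<union> Ls ! 0) h)
           \<le> sqrt 2 * d / (f * (1 - d)) * N (restr (- L0) h)
             + sqrt (1 + d) / (1 - d) * norm (A *v h)"
proof -
  let ?S = "\<Sum>j\<in>{1..<length Ls}. norm (restr (Ls ! j) h)"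
  have parts: "\<And>j. j < length Ls \<Longrightarrow> group_sparse G k (Ls ! j) \<and> Ls ! j \<subseteq> - L0"
    and disj: "\<And>i j. i < length Ls \<Longrightarrow> j < length Ls \<Longrightarrow> i \<noteq> j \<Longrightarrow> Ls ! i \<inter> Ls ! j = {}"
    using assms(11) unfolding opt_decomp_def Let_def by auto
  have tail: "group_sparse G k (Ls ! j) \<and> Ls ! j \<inter> (L0 \<union> Ls ! 0) = {}"
    if "j \<in> {1..<length Ls}" for j
    using parts[of j] disj[of j 0] that by fastforce
  have "(1 - d) * norm (restr (L0 \<union> Ls ! 0) h) \<le> sqrt (1 + d) * norm (A *v h) + sqrt 2 * d * ?S"
    using parts[of 0] assms(4,12) tail
    by (intro group_RIP_head_bound[OF assms(3) _ assms(10)] opt_decomp_restr_split[OF assms(11,12)])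
      auto
  also have "\<dots> \<le> sqrt (1 + d) * norm (A *v h) + sqrt 2 * d * (N (restr (- L0) h) / f)"
    using assms(4,9-11) by (intro add_left_mono mult_left_mono) auto
  finally have "norm (restr (L0 \<union> Ls ! 0) h)
      \<le> (sqrt (1 + d) * norm (A *v h) + sqrt 2 * d * (N (restr (- L0) h) / f)) / (1 - d)"
    using assms(5) by (simp add: pos_le_divide_eq mult.commute)
  also have "\<dots> = sqrt 2 * d / (f * (1 - d)) * N (restr (- L0) h)
      + sqrt (1 + d) / (1 - d) * norm (A *v h)"
    by (simp add: add_divide_distrib)
  finally show ?thesis .
qed

end
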